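(* If $\mathcal{T}^{\mathrm{Exp}(\mu)}\geq_{\mathrm{st}}\mathcal{T}$ for all $\mu\in(0,\infty)$, then $\overline{F}(0)=1$.
   Context: Standing assumptions: $\mathcal{T}$ is a probability law on the Borel sets of $[0,\infty]$ with $\mathcal{T}((0,\infty])>0$ and $\inf\mathrm{supp}(\mathcal{T})=0$; $\overline{F}(t):=\mathcal{T}((t,\infty])$. For $\mu>0$: let $(T_k)$ be i.i.d. with law $\mathcal{T}$ and $(R_k)$ an independent i.i.d. sequence of exponential random variables with mean $\mu^{-1}$; $\mathcal{T}^{\mathrm{Exp}(\mu)}$ is the law of $\tilde T$ defined a.s. by $\tilde T=R_1+\cdots+R_{k-1}+T_k$ on $\{R_1<T_1,\ldots,R_{k-1}<T_{k-1},T_k\leq R_k\}$, $k\in\mathbb{N}$. $\mathcal{A}\geq_{\mathrm{st}}\mathcal{B}$ means $\mathcal{A}((t,\infty])\geq\mathcal{B}((t,\infty])$ for all $t\in[0,\infty)$. *)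

theory Defs
  imports "HOL-Probability.Probability"
begin

definition Fbar :: "ennreal measure \<Rightarrow> ennreal \<Rightarrow> real" where
  "Fbar T t = measure T {t<..}"

definition measure_support :: "ennreal measure \<Rightarrow> ennreal set" where
  "measure_support T = {x. \<forall>U. open U \<longrightarrow> x \<in> U \<longrightarrow> 0 < emeasure T U}"

definition stoch_ge :: "ennreal measure \<Rightarrow> ennreal measure \<Rightarrow> bool" where
  "stoch_ge A B \<longleftrightarrow> (\<forall>t::ennreal. t < \<infinity> \<longrightarrow> measure B {t<..} \<le> measure A {t<..})"

text \<open>Canonical probability space for the i.i.d. pairs (T_k, R_k), k = 0,1,2,...:
  T_k with law T, R_k exponential with rate \<mu> (mean 1/\<mu>), all independent.\<close>
definition exp_space :: "ennreal measure \<Rightarrow> real \<Rightarrow> (nat \<Rightarrow> ennreal \<times> real) measure" where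
  "exp_space T \<mu> = PiM UNIV (\<lambda>_::nat. T \<Otimes>\<^sub>M density lborel (\<lambda>x. ennreal (exponential_density \<mu> x)))"

text \<open>Ttilde = R_0 + ... + R_{k-1} + T_k where k is the first index with T_k \<le> R_k
  (0-based indexing). On the null event that no such k exists we put \<infinity>.\<close>
definition exp_Ttilde :: "(nat \<Rightarrow> ennreal \<times> real) \<Rightarrow> ennreal" where
  "exp_Ttilde \<omega> =
     (if \<exists>k. fst (\<omega> k) \<le> ennreal (snd (\<omega> k))
      then (let k = (LEAST k. fst (\<omega> k) \<le> ennreal (snd (\<omega> k)))
            in ennreal (\<Sum>i<k. snd (\<omega> i)) + fst (\<omega> k))
      else \<infinity>)"

definition exp_mix :: "ennreal measure \<Rightarrow> real \<Rightarrow> ennreal measure" where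
  "exp_mix T \<mu> = distr (exp_space T \<mu>) borel exp_Ttilde"

end

theory Submission
  imports Defs
begin

text \<open>Suppose \<open>T\<close> has an atom of mass \<open>p > 0\<close> at \<open>0\<close>. Except with probability \<open>(1 - p)^n\<close> some
  \<open>T_j\<close> with \<open>j < n\<close> vanishes; then the stopping index is at most \<open>j\<close>, and \<open>T~\<close> is bounded by the sum
  of at most \<open>n\<close> clocks \<open>R_i\<close>, each of which exceeds \<open>t / n\<close> only with probability \<open>exp (- \<mu> t / n)\<close>.
  Thus the tail of \<open>T^Exp(\<mu>)\<close> beyond \<open>t\<close> is at most \<open>(1 - p)^n + n exp (- \<mu> t / n)\<close>, which for large
  \<open>n\<close> and then large \<open>\<mu>\<close> drops below \<open>T((t,\<infinity>]) > 0\<close>, contradicting stochastic dominance.\<close>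

lemma emeasure_distr_le:
  "emeasure (distr M N f) A \<le> emeasure M (f -` A \<inter> space M)"
  unfolding distr_def emeasure_measure_of_conv by auto

lemma emeasure_exponential_greaterThan:
  assumes "0 < \<mu>" "0 \<le> s"
  shows "emeasure (density lborel (\<lambda>x. ennreal (exponential_density \<mu> x))) {s<..}
           = ennreal (exp (- s * \<mu>))"
proof -
  let ?E = "density lborel (\<lambda>x. ennreal (exponential_density \<mu> x))"
  interpret E: prob_space ?E using prob_space_exponential_density[OF assms(1)] .
  have "distributed ?E lborel (\<lambda>x. x) (exponential_density \<mu>)"
    by (auto simp: distributed_def distr_id2)
  from E.exponential_distributedD_gt[OF this assms(2,1)]
  show ?thesis by (simp add: E.emeasure_eq_measure greaterThan_def)
qed

lemma
  fixes Q :: "'a measure"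
  assumes Q: "prob_space Q" "space Q = UNIV" and J: "finite J"
    and A: "\<And>j. j \<in> J \<Longrightarrow> A j \<in> sets Q"
  shows sets_PiM_cylinder: "{\<omega>. \<forall>j\<in>J. \<omega> j \<in> A j} \<in> sets (PiM UNIV (\<lambda>_::'i. Q))"
    and emeasure_PiM_cylinder:
      "emeasure (PiM UNIV (\<lambda>_::'i. Q)) {\<omega>. \<forall>j\<in>J. \<omega> j \<in> A j} = (\<Prod>j\<in>J. emeasure Q (A j))"
proof -
  have cyl: "{\<omega>. \<forall>j\<in>J. \<omega> j \<in> A j} = prod_emb UNIV (\<lambda>_. Q) J (PiE J A)"
    by (auto simp: prod_emb_def Q(2) PiE_iff)
  show "{\<omega>. \<forall>j\<in>J. \<omega> j \<in> A j} \<in> sets (PiM UNIV (\<lambda>_::'i. Q))"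
    unfolding cyl using J A by (intro sets_PiM_I) auto
  show "emeasure (PiM UNIV (\<lambda>_::'i. Q)) {\<omega>. \<forall>j\<in>J. \<omega> j \<in> A j} = (\<Prod>j\<in>J. emeasure Q (A j))"
    unfolding cyl using Q J A by (intro emeasure_PiM_emb) auto
qed

lemma
  assumes T: "prob_space T" "sets T = sets borel" and \<mu>: "0 < \<mu>"
    and J: "finite J" and A: "\<And>j. j \<in> J \<Longrightarrow> A j \<in> sets (borel \<Otimes>\<^sub>M borel)"
  shows sets_exp_space_cylinder: "{\<omega>. \<forall>j\<in>J. \<omega> j \<in> A j} \<in> sets (exp_space T \<mu>)"
    and emeasure_exp_space_cylinder: "emeasure (exp_space T \<mu>) {\<omega>. \<forall>j\<in>J. \<omega> j \<in> A j}
      = (\<Prod>j\<in>J. emeasure (T \<Otimes>\<^sub>M density lborel (\<lambda>x. ennreal (exponential_density \<mu> x))) (A j))"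
proof -
  let ?Q = "T \<Otimes>\<^sub>M density lborel (\<lambda>x. ennreal (exponential_density \<mu> x))"
  have Q: "prob_space ?Q"
    by (intro prob_space_pair T prob_space_exponential_density \<mu>)
  have space_Q: "space ?Q = UNIV"
    using sets_eq_imp_space_eq[OF T(2)] by (simp add: space_pair_measure)
  have "sets ?Q = sets (borel \<Otimes>\<^sub>M borel)"
    by (intro sets_pair_measure_cong T(2)) simp
  with A have A_Q: "\<And>j. j \<in> J \<Longrightarrow> A j \<in> sets ?Q"
    by blast
  show "{\<omega>. \<forall>j\<in>J. \<omega> j \<in> A j} \<in> sets (exp_space T \<mu>)"
    unfolding exp_space_def by (rule sets_PiM_cylinder[OF Q space_Q J A_Q])
  show "emeasure (exp_space T \<mu>) {\<omega>. \<forall>j\<in>J. \<omega> j \<in> A j} = (\<Prod>j\<in>J. emeasure ?Q (A j))"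
    unfolding exp_space_def by (rule emeasure_PiM_cylinder[OF Q space_Q J A_Q])
qed

lemma exp_Ttilde_le_if_zero_and_short_clocks:
  fixes s :: real
  assumes zero: "fst (\<omega> j) = 0" and short: "\<And>i. i \<le> j \<Longrightarrow> snd (\<omega> i) \<le> s" and "0 \<le> s"
  shows "exp_Ttilde \<omega> \<le> ennreal (Suc j * s)"
proof -
  let ?stop = "\<lambda>k. fst (\<omega> k) \<le> ennreal (snd (\<omega> k))"
  define K where "K = (LEAST k. ?stop k)"
  have stop_j: "?stop j" using zero by simp
  have stop_K: "?stop K" unfolding K_def by (rule LeastI[of ?stop, OF stop_j])
  have "K \<le> j" unfolding K_def by (rule Least_le[of ?stop, OF stop_j])
  have "exp_Ttilde \<omega> = ennreal (\<Sum>i<K. snd (\<omega> i)) + fst (\<omega> K)"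
    using stop_j unfolding exp_Ttilde_def K_def Let_def by (simp only: if_P exI)
  also have "\<dots> \<le> ennreal (\<Sum>i<K. s) + ennreal s"
  proof (rule add_mono)
    show "ennreal (\<Sum>i<K. snd (\<omega> i)) \<le> ennreal (\<Sum>i<K. s)"
      using \<open>K \<le> j\<close> short by (intro ennreal_leI sum_mono) simp
    show "fst (\<omega> K) \<le> ennreal s"
      using \<open>K \<le> j\<close> short by (intro order_trans[OF stop_K] ennreal_leI) simp
  qed
  also have "\<dots> = ennreal (Suc K * s)"
    using \<open>0 \<le> s\<close> by (simp add: ennreal_plus distrib_right)
  also have "\<dots> \<le> ennreal (Suc j * s)"
    using \<open>K \<le> j\<close> \<open>0 \<le> s\<close> by (intro ennreal_leI mult_right_mono) simp_all
  finally show ?thesis .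
qed

lemma emeasure_exp_mix_greaterThan_le:
  fixes t :: real and n :: nat
  assumes T: "prob_space T" "sets T = sets borel" and \<mu>: "0 < \<mu>" and "0 \<le> t" "0 < n"
  shows "emeasure (exp_mix T \<mu>) {ennreal t<..}
           \<le> emeasure T (-{0}) ^ n + of_nat n * ennreal (exp (- (t / n) * \<mu>))"
proof -
  let ?P = "exp_space T \<mu>"
  let ?E = "density lborel (\<lambda>x. ennreal (exponential_density \<mu> x))"
  interpret T: prob_space T by (rule T(1))
  interpret E: prob_space ?E by (rule prob_space_exponential_density[OF \<mu>])
  define no_zero :: "(nat \<Rightarrow> ennreal \<times> real) set" where "no_zero = {\<omega>. \<forall>j\<in>{..<n}. \<omega> j \<in> (-{0}) \<times> UNIV}"
  define long :: "nat \<Rightarrow> (nat \<Rightarrow> ennreal \<times> real) set" where "long i = {\<omega>. \<forall>j\<in>{i}. \<omega> j \<in> UNIV \<times> {t / n<..}}" for i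
  have sets_no_zero: "no_zero \<in> sets ?P"
    unfolding no_zero_def using T \<mu> by (intro sets_exp_space_cylinder) auto
  have sets_long: "long i \<in> sets ?P" for i
    unfolding long_def by (rule sets_exp_space_cylinder[OF T \<mu>]) auto
  have emeasure_long: "emeasure ?P (long i) = ennreal (exp (- (t / n) * \<mu>))" for i
    unfolding long_def using T \<mu> T.emeasure_space_1 sets_eq_imp_space_eq[OF T(2)] \<open>0 \<le> t\<close>
    by (subst emeasure_exp_space_cylinder)
       (auto simp: E.emeasure_pair_measure_Times emeasure_exponential_greaterThan)
  have covering: "exp_Ttilde -` {ennreal t<..} \<inter> space ?P \<subseteq> no_zero \<union> (\<Union>i<n. long i)"
  proof
    fix \<omega> assume \<omega>: "\<omega> \<in> exp_Ttilde -` {ennreal t<..} \<inter> space ?P"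
    show "\<omega> \<in> no_zero \<union> (\<Union>i<n. long i)"
    proof (rule ccontr)
      assume "\<omega> \<notin> no_zero \<union> (\<Union>i<n. long i)"
      then obtain j where "j < n" "fst (\<omega> j) = 0" and short: "\<And>i. i < n \<Longrightarrow> snd (\<omega> i) \<le> t / n"
        unfolding no_zero_def long_def by (auto simp: not_less mem_Times_iff)
      then have "exp_Ttilde \<omega> \<le> ennreal (Suc j * (t / n))"
        using \<open>0 \<le> t\<close> by (intro exp_Ttilde_le_if_zero_and_short_clocks) auto
      also have "\<dots> \<le> ennreal (n * (t / n))"
        using \<open>j < n\<close> \<open>0 \<le> t\<close> by (intro ennreal_leI mult_right_mono) auto
      also have "\<dots> = ennreal t"
        using \<open>0 < n\<close> by simp
      finally show False using \<omega> by auto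
    qed
  qed
  have "emeasure (exp_mix T \<mu>) {ennreal t<..} \<le> emeasure ?P (no_zero \<union> (\<Union>i<n. long i))"
    unfolding exp_mix_def using covering sets_no_zero sets_long
    by (intro order_trans[OF emeasure_distr_le] emeasure_mono) auto
  also have "\<dots> \<le> emeasure ?P no_zero + (\<Sum>i<n. emeasure ?P (long i))"
    using sets_no_zero sets_long
    by (intro order_trans[OF emeasure_subadditive] add_left_mono emeasure_subadditive_finite) auto
  also have "emeasure ?P no_zero = emeasure T (-{0}) ^ n"
    unfolding no_zero_def using T \<mu> E.emeasure_space_1
    by (subst emeasure_exp_space_cylinder) (auto simp: E.emeasure_pair_measure_Times)
  also have "(\<Sum>i<n. emeasure ?P (long i)) = of_nat n * ennreal (exp (- (t / n) * \<mu>))"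
    using emeasure_long by simp
  finally show ?thesis by simp
qed

lemma measure_exp_mix_greaterThan_le:
  fixes t :: real and n :: nat
  assumes T: "prob_space T" "sets T = sets borel" and "0 < \<mu>" "0 \<le> t" "0 < n"
  shows "measure (exp_mix T \<mu>) {ennreal t<..} \<le> measure T (-{0}) ^ n + n * exp (- (t / n) * \<mu>)"
proof -
  interpret T: prob_space T by (rule T(1))
  have "emeasure T (-{0}) ^ n + of_nat n * ennreal (exp (- (t / n) * \<mu>))
      = ennreal (measure T (-{0}) ^ n + n * exp (- (t / n) * \<mu>))"
    by (simp add: T.emeasure_eq_measure ennreal_power ennreal_of_nat_eq_real_of_nat
        ennreal_mult'' ennreal_plus)
  with emeasure_exp_mix_greaterThan_le[OF assms] show ?thesis
    unfolding measure_def by (intro enn2real_leI) auto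
qed

lemma exists_real_greaterThan_emeasure_pos:
  fixes M :: "ennreal measure"
  assumes "sets M = sets borel" and "emeasure M {0<..} \<noteq> 0"
  shows "\<exists>t>0. emeasure M {ennreal t<..} \<noteq> 0"
proof (rule ccontr)
  assume "\<not> ?thesis"
  then have "emeasure M (\<Union>m. {ennreal (1 / Suc m)<..}) = 0"
    using assms(1) by (intro emeasure_UN_eq_0) auto
  moreover have "(\<Union>m. {ennreal (1 / Suc m)<..}) = {0<..}"
  proof (intro antisym subsetI)
    fix x :: ennreal assume "x \<in> {0<..}"
    show "x \<in> (\<Union>m. {ennreal (1 / Suc m)<..})"
    proof (cases x)
      case (real r)
      with \<open>x \<in> {0<..}\<close> have "0 < r" by (auto simp: ennreal_less_iff)
      then obtain m where "inverse (real (Suc m)) < r" using reals_Archimedean by blast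
      then show ?thesis using real \<open>0 < r\<close> by (auto simp: ennreal_less_iff inverse_eq_divide)
    qed (auto intro!: exI[of _ 0])
  qed (auto intro: le_less_trans[OF zero_le])
  ultimately show False using assms(2) by simp
qed

lemma exists_geometric_plus_exponential_less:
  fixes q c t :: real
  assumes "0 \<le> q" "q < 1" "0 < c" "0 < t"
  shows "\<exists>n>0. \<exists>\<mu>>0. q ^ n + n * exp (- (t / n) * \<mu>) < c"
proof -
  obtain n0 where "q ^ n0 < c / 2"
    using real_arch_pow_inv[of "c / 2" q] assms by auto
  define n where "n = Suc n0"
  have geometric: "q ^ n < c / 2"
    using power_decreasing[of n0 n q] \<open>q ^ n0 < c / 2\<close> assms unfolding n_def by force
  define s where "s = t / n"
  have "0 < s" unfolding s_def n_def using assms by simp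
  define \<mu> where "\<mu> = 2 * n / (c * s) + 1"
  have "0 < \<mu>" unfolding \<mu>_def using \<open>0 < s\<close> assms by (intro add_nonneg_pos) auto
  have "2 * n / c < s * \<mu>" unfolding \<mu>_def using \<open>0 < s\<close> assms by (simp add: field_simps)
  also have "\<dots> < exp (s * \<mu>)" by (rule exp_gt_self)
  finally have "n * exp (- s * \<mu>) < c / 2"
    using assms by (simp add: exp_minus field_simps)
  with geometric \<open>0 < \<mu>\<close> show ?thesis
    unfolding s_def n_def by (intro exI[of _ "Suc n0"] exI[of _ \<mu>]) auto
qed

theorem mainTheorem13:
  fixes T :: "ennreal measure"
  assumes "prob_space T"
    and "sets T = sets borel"
    and "measure T {0<..} > 0"
    and "Inf (measure_support T) = 0"
    and "\<forall>\<mu>::real. \<mu> > 0 \<longrightarrow> stoch_ge (exp_mix T \<mu>) T"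
  shows "Fbar T 0 = 1"
proof (rule ccontr)
  assume "Fbar T 0 \<noteq> 1"
  interpret T: prob_space T by (rule assms(1))
  have positive_part: "{0::ennreal<..} = -{0}"
    by (auto simp: zero_less_iff_neq_zero)
  define q where "q = measure T (-{0})"
  have "0 \<le> q" unfolding q_def by simp
  have "q < 1"
    using \<open>Fbar T 0 \<noteq> 1\<close> T.prob_le_1[of "-{0}"] unfolding q_def Fbar_def positive_part
    by linarith
  obtain t :: real where "0 < t" and "emeasure T {ennreal t<..} \<noteq> 0"
    using exists_real_greaterThan_emeasure_pos[OF assms(2)] assms(3)
    by (auto simp: T.emeasure_eq_measure)
  define c where "c = measure T {ennreal t<..}"
  have "0 < c"
    using \<open>emeasure T {ennreal t<..} \<noteq> 0\<close> unfolding c_def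
    by (simp add: T.emeasure_eq_measure zero_less_measure_iff)
  then obtain n \<mu> where "0 < n" "0 < \<mu>" and small: "q ^ n + n * exp (- (t / n) * \<mu>) < c"
    using exists_geometric_plus_exponential_less[OF \<open>0 \<le> q\<close> \<open>q < 1\<close> _ \<open>0 < t\<close>] by blast
  have "c \<le> measure (exp_mix T \<mu>) {ennreal t<..}"
    using assms(5) \<open>0 < \<mu>\<close> unfolding stoch_ge_def c_def by auto
  also have "\<dots> \<le> q ^ n + n * exp (- (t / n) * \<mu>)"
    unfolding q_def using assms(1,2) \<open>0 < \<mu>\<close> \<open>0 < t\<close> \<open>0 < n\<close>
    by (intro measure_exp_mix_greaterThan_le) auto
  finally show False using small by simp
qed

end
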